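(* Let $\mathcal{D}$ be a banded unlink diagram of a surface link $S$ in a smooth $4$-manifold $X$, with diagrammatic quandle $Q(\mathcal{D})$, and let $C=\{x_1,\dots,x_n\}$ be the primary generators corresponding to the arcs contained in a single component of the link $L$ of $\mathcal{D}$. Let $d$ be an integer. If $x_i^d\equiv1$ for some $x_i\in C$, then $x_j^d\equiv1$ for every $x_j\in C$.
   Context: Banded unlink diagram: for a self-indexing Morse function $h:X\to[0,4]$ with Kirby diagram $\mathcal{K}=L_1\cup L_2$ (dotted link $L_1$ for $1$-handles, framed link $L_2$ for $2$-handles), a surface in banded unlink position meets $h^{-1}(t)$, $t\in(1/2,3/2)$, in a link $L$, and at level $3/2$ in $L$ plus a set $v$ of bands; the banded unlink diagram is $\mathcal{D}=(\mathcal{K},L,v)$ (with $L$ bounding disjoint disks at level $1/2$ and the band-resolved link bounding disjoint disks at level $5/2$). $Q(\mathcal{D})$ is the augmented quandle presented with primary generators the arcs $x_i$ of $L$ and operator generators the arcs $a_j$ of $L_1$; at each crossing of $L$ under an arc $y$ of $L\cup L_1$ the incoming arc $x_i$ and outgoing arc $x_{i+1}$ satisfy $x_{i+1}=x_i^{y^{\epsilon}}$ with $\epsilon=\pm1$ determined by the orientation of $y$ (no change under bands or $L_2$); further relations come from bands, crossings of $L_1$ and the $2$-handle link $L_2$. Every element acts on $Q(\mathcal{D})$ through its image in the operator group $F(\mathbf x\cup\mathbf a)/\!\equiv$; for a word $w\in F(\mathbf x\cup\mathbf a)$, $w\equiv1$ means $w$ is trivial in this operator group (it acts as the identity), and the augmentation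 satisfies $\partial(x^{w})=w^{-1}\partial(x)w$. *)

theory Defs
  imports "HOL-Algebra.Algebra"
begin

definition aug_quandle ::
  "'q set \<Rightarrow> ('g,'m) monoid_scheme \<Rightarrow> ('q \<Rightarrow> 'g \<Rightarrow> 'q) \<Rightarrow> ('q \<Rightarrow> 'g) \<Rightarrow> bool" where
  "aug_quandle Q G act aug \<longleftrightarrow>
     group G \<and>
     (\<forall>x\<in>Q. \<forall>g\<in>carrier G. act x g \<in> Q) \<and>
     (\<forall>x\<in>Q. act x \<one>\<^bsub>G\<^esub> = x) \<and>
     (\<forall>x\<in>Q. \<forall>g\<in>carrier G. \<forall>h\<in>carrier G. act (act x g) h = act x (g \<otimes>\<^bsub>G\<^esub> h)) \<and>
     (\<forall>x\<in>Q. aug x \<in> carrier G) \<and>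
     (\<forall>x\<in>Q. act x (aug x) = x) \<and>
     (\<forall>x\<in>Q. \<forall>g\<in>carrier G. aug (act x g) = inv\<^bsub>G\<^esub> g \<otimes>\<^bsub>G\<^esub> aug x \<otimes>\<^bsub>G\<^esub> g)"

text \<open>Image in the operator group of a generator of F(x \<union> a):
  a primary generator x (arc of L) maps to aug(x), an operator generator
  a (arc of the dotted link L1) maps to its operator.\<close>

fun op_gen :: "('q \<Rightarrow> 'g) \<Rightarrow> ('p \<Rightarrow> 'q) \<Rightarrow> ('a \<Rightarrow> 'g) \<Rightarrow> 'p + 'a \<Rightarrow> 'g" where
  "op_gen aug ip ia (Inl x) = aug (ip x)"
| "op_gen aug ip ia (Inr a) = ia a"

definition sgn_pow :: "('g,'m) monoid_scheme \<Rightarrow> 'g \<Rightarrow> bool \<Rightarrow> 'g" where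
  "sgn_pow G g e = (if e then g else inv\<^bsub>G\<^esub> g)"

text \<open>Crossing relations along one component of L: the arcs of the component,
  in order along its orientation, are xs!0, ..., xs!(n-1) (cyclically); passing
  from xs!k to xs!(k+1 mod n) the component crosses under the arc ys!k of
  L \<union> L1 (Inl = arc of L, Inr = arc of L1) with sign es!k, giving the relation
  x_(k+1) = x_k^(y_k^eps_k) in Q(D).\<close>

definition component_relations ::
  "('g,'m) monoid_scheme \<Rightarrow> ('q \<Rightarrow> 'g \<Rightarrow> 'q) \<Rightarrow> ('q \<Rightarrow> 'g) \<Rightarrow> ('p \<Rightarrow> 'q) \<Rightarrow> ('a \<Rightarrow> 'g)
    \<Rightarrow> 'p list \<Rightarrow> ('p + 'a) list \<Rightarrow> bool list \<Rightarrow> bool" where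
  "component_relations G act aug ip ia xs ys es \<longleftrightarrow>
     xs \<noteq> [] \<and> length ys = length xs \<and> length es = length xs \<and>
     (\<forall>k < length xs.
        ip (xs ! ((k + 1) mod length xs)) =
        act (ip (xs ! k)) (sgn_pow G (op_gen aug ip ia (ys ! k)) (es ! k)))"

end

theory Submission
  imports Defs
begin

text \<open>Along a component of \<open>L\<close> each arc is obtained from the previous one by the action of
  an element \<open>g\<close> of the operator group, so its augmentation is the conjugate
  \<open>g\<inverse> \<partial>(x) g\<close> of the previous augmentation. Conjugation is an automorphism, hence preserves
  the condition \<open>\<partial>(x)\<^sup>d = 1\<close>, and going once around the (cyclic) component transports it
  from any arc to every other.\<close>

lemma (in group) conj_hom:
  assumes "g \<in> carrier G"
  shows "(\<lambda>a. inv g \<otimes> a \<otimes> g) \<in> hom G G"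
proof (rule homI)
  fix x y assume xy: "x \<in> carrier G" "y \<in> carrier G"
  have "inv g \<otimes> (x \<otimes> y) \<otimes> g = inv g \<otimes> x \<otimes> (g \<otimes> inv g) \<otimes> y \<otimes> g"
    using xy assms by (simp add: m_assoc)
  also have "\<dots> = inv g \<otimes> x \<otimes> g \<otimes> (inv g \<otimes> y \<otimes> g)"
    using xy assms by (simp only: m_assoc inv_closed m_closed)
  finally show "inv g \<otimes> (x \<otimes> y) \<otimes> g = inv g \<otimes> x \<otimes> g \<otimes> (inv g \<otimes> y \<otimes> g)" .
qed (use assms in simp)

lemma (in group) int_pow_conj:
  assumes "g \<in> carrier G" "a \<in> carrier G"
  shows "(inv g \<otimes> a \<otimes> g) [^] (d::int) = inv g \<otimes> a [^] d \<otimes> g"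
  using hom_int_pow[OF conj_hom[OF assms(1)] assms(2) is_group is_group] by simp

lemma aug_quandle_aug_act_int_pow_eq_one:
  assumes "aug_quandle Q G act aug" "x \<in> Q" "g \<in> carrier G"
    and "aug x [^]\<^bsub>G\<^esub> (d::int) = \<one>\<^bsub>G\<^esub>"
  shows "aug (act x g) [^]\<^bsub>G\<^esub> d = \<one>\<^bsub>G\<^esub>"
proof -
  have grp: "group G" and aug_x: "aug x \<in> carrier G"
    and aug_act: "aug (act x g) = inv\<^bsub>G\<^esub> g \<otimes>\<^bsub>G\<^esub> aug x \<otimes>\<^bsub>G\<^esub> g"
    using assms(1-3) unfolding aug_quandle_def by blast+
  interpret group G by (rule grp)
  show ?thesis
    using assms(3,4) aug_x by (simp add: aug_act int_pow_conj)
qed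

lemma cyclic_propagation:
  assumes step: "\<And>k. k < length xs \<Longrightarrow> P (xs ! k) \<Longrightarrow> P (xs ! ((k + 1) mod length xs))"
    and "x \<in> set xs" "y \<in> set xs" "P x"
  shows "P y"
proof -
  define n where "n = length xs"
  obtain i j where ij: "i < n" "j < n" "xs ! i = x" "xs ! j = y"
    using assms(2,3) unfolding n_def by (auto simp: in_set_conv_nth)
  have around: "P (xs ! ((i + m) mod n))" for m
  proof (induction m)
    case 0
    then show ?case using ij assms(4) by simp
  next
    case (Suc m)
    have "(i + m) mod n < n"
      using ij(1) by simp
    moreover have "(i + Suc m) mod n = ((i + m) mod n + 1) mod n"
      by (simp add: mod_Suc_eq)
    ultimately show ?case
      using step[of "(i + m) mod n"] Suc unfolding n_def by simp
  qed
  have "(i + (j + n - i)) mod n = j"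
    using ij(1,2) by simp
  then show ?thesis
    using around[of "j + n - i"] ij(4) by simp
qed

theorem lemma3p15:
  fixes Q :: "'q set" and G :: "('g,'m) monoid_scheme"
    and act :: "'q \<Rightarrow> 'g \<Rightarrow> 'q" and aug :: "'q \<Rightarrow> 'g"
    and ip :: "'p \<Rightarrow> 'q" and ia :: "'a \<Rightarrow> 'g"
    and xs :: "'p list" and ys :: "('p + 'a) list" and es :: "bool list"
    and d :: int and xi xj :: 'p
  assumes "aug_quandle Q G act aug"
    and "\<forall>x. ip x \<in> Q"
    and "\<forall>a. ia a \<in> carrier G"
    and "Q = {act (ip x) g | x g. g \<in> carrier G}"
    and "generate G (range (op_gen aug ip ia)) = carrier G"
    and "component_relations G act aug ip ia xs ys es"
    and "xi \<in> set xs" and "xj \<in> set xs"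
    and "aug (ip xi) [^]\<^bsub>G\<^esub> d = \<one>\<^bsub>G\<^esub>"
  shows "aug (ip xj) [^]\<^bsub>G\<^esub> d = \<one>\<^bsub>G\<^esub>"
proof -
  have "group G" using assms(1) unfolding aug_quandle_def by blast
  have op_gen_closed: "op_gen aug ip ia y \<in> carrier G" for y
    using assms(1-3) unfolding aug_quandle_def by (cases y) auto
  have crossing_closed: "sgn_pow G (op_gen aug ip ia y) e \<in> carrier G" for y e
    using op_gen_closed group.inv_closed[OF \<open>group G\<close>] by (simp add: sgn_pow_def)
  show ?thesis
  proof (rule cyclic_propagation[where P = "\<lambda>x. aug (ip x) [^]\<^bsub>G\<^esub> d = \<one>\<^bsub>G\<^esub>"])
    fix k assume k: "k < length xs" and "aug (ip (xs ! k)) [^]\<^bsub>G\<^esub> d = \<one>\<^bsub>G\<^esub>"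
    moreover have "ip (xs ! ((k + 1) mod length xs)) =
        act (ip (xs ! k)) (sgn_pow G (op_gen aug ip ia (ys ! k)) (es ! k))"
      using assms(6) k unfolding component_relations_def by blast
    ultimately show "aug (ip (xs ! ((k + 1) mod length xs))) [^]\<^bsub>G\<^esub> d = \<one>\<^bsub>G\<^esub>"
      using aug_quandle_aug_act_int_pow_eq_one[OF assms(1)] assms(2) crossing_closed by simp
  qed (use assms(7-9) in auto)
qed

end
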